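(* Let $E$ be a finite set and $V \subset \mathbb R^E$ a linear subspace defining an oriented matroid $M$. If $F$ is an acyclic flat of $M$, then \[ \mathcal Y_V \cap \big(0^F \times (\mathbb P^1_{\mathbb R})^{E \setminus F}\big) = \mathcal Y_{V \cap \ker(\pi_F)}. \]
   Context: $\mathbb P^1_{\mathbb R} = \mathbb R\cup\{\infty\}$. For a linear subspace $W \subset \mathbb R^E$, $\mathcal Y_W$ denotes the closure of $W \cap \mathbb R_{\geq 0}^E$ in $(\mathbb P^1_{\mathbb R})^E$ in the analytic topology. $\pi_F : \mathbb R^E \to \mathbb R^F$ is the coordinate projection, so $V\cap \ker(\pi_F)$ is the subspace of vectors of $V$ vanishing on $F$. $0^F \times (\mathbb P^1_{\mathbb R})^{E\setminus F}$ is the set of points of $(\mathbb P^1_{\mathbb R})^E$ whose coordinates in $F$ are $0$. Flats of $M$ are the zero sets $\{i: v_i=0\}$ of $v \in V$; a flat $F$ is acyclic if some $v \in V$ has $v_i = 0$ for $i \in F$ and $v_i > 0$ for $i \notin F$. *)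

theory Defs
  imports "HOL-Analysis.Analysis"
begin

text \<open>The real projective line P^1_R = R \<union> {\<infinity>} is modelled by the type real option:
  Some t is the real number t and None is the point at infinity.\<close>

type_synonym P1 = "real option"

text \<open>Stereographic identification of P^1_R with the unit circle in R^2; it is injective
  and onto the circle, so pulling back the Euclidean topology gives the analytic topology
  on P^1_R (the one-point compactification of R).\<close>

definition stereo :: "P1 \<Rightarrow> real \<times> real" where
  "stereo p = (case p of
      None \<Rightarrow> (0, 1)
    | Some t \<Rightarrow> (2 * t / (1 + t\<^sup>2), (t\<^sup>2 - 1) / (1 + t\<^sup>2)))"

definition P1_top :: "P1 topology" where
  "P1_top = pullback_topology UNIV stereo euclidean"

definition P1_pow_top :: "('e \<Rightarrow> P1) topology" where
  "P1_pow_top = product_topology (\<lambda>_. P1_top) UNIV"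

definition emb :: "(real ^ 'e) \<Rightarrow> ('e \<Rightarrow> P1)" where
  "emb v = (\<lambda>i. Some (v $ i))"

definition Ycl :: "(real ^ 'e) set \<Rightarrow> ('e \<Rightarrow> P1) set" where
  "Ycl W = P1_pow_top closure_of (emb ` (W \<inter> {v. \<forall>i. 0 \<le> v $ i}))"

text \<open>Flats of the oriented matroid of V are zero sets of vectors of V.\<close>

definition zero_set :: "(real ^ 'e) \<Rightarrow> 'e set" where
  "zero_set v = {i. v $ i = 0}"

definition is_flat :: "(real ^ 'e) set \<Rightarrow> 'e set \<Rightarrow> bool" where
  "is_flat V F \<longleftrightarrow> (\<exists>v\<in>V. F = zero_set v)"

definition acyclic_flat :: "(real ^ 'e) set \<Rightarrow> 'e set \<Rightarrow> bool" where
  "acyclic_flat V F \<longleftrightarrow> is_flat V F \<and>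
     (\<exists>v\<in>V. (\<forall>i\<in>F. v $ i = 0) \<and> (\<forall>i. i \<notin> F \<longrightarrow> v $ i > 0))"

end

theory Submission
  imports Defs
begin

text \<open>
  The inclusion from right to left holds because the coordinates in F vanish on all of
  V \<inter> ker(\<pi>_F). Conversely, let p \<in> Y_V vanish on F; it is a limit of nonnegative v \<in> V
  whose F-coordinates are small. A bounded right inverse of the restriction V \<rightarrow> R^F yields
  z \<in> V with the same F-coordinates as v and norm z bounded by them. Then v - z vanishes on F
  but may have small negative entries, which are repaired by adding a small multiple of the
  acyclicity witness u (zero on F, positive off F). The resulting nonnegative vector of
  V \<inter> ker(\<pi>_F) is uniformly close to v, and the stereographic chart is 2-Lipschitz, so p is
  also a limit of such vectors.
\<close>

lemma dist_stereo_Some_sq: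
  "(dist (stereo (Some a)) (stereo (Some b)))\<^sup>2 = 4 * (a - b)\<^sup>2 / ((1 + a\<^sup>2) * (1 + b\<^sup>2))"
proof -
  have pos: "1 + a\<^sup>2 > 0" "1 + b\<^sup>2 > 0"
    by (auto simp: add_pos_nonneg)
  have "(dist (stereo (Some a)) (stereo (Some b)))\<^sup>2 =
      (2*a/(1+a\<^sup>2) - 2*b/(1+b\<^sup>2))\<^sup>2 + ((a\<^sup>2-1)/(1+a\<^sup>2) - (b\<^sup>2-1)/(1+b\<^sup>2))\<^sup>2"
    by (simp add: stereo_def dist_Pair_Pair dist_real_def)
  also have "\<dots> = ((2*a*(1+b\<^sup>2) - 2*b*(1+a\<^sup>2))\<^sup>2 + ((a\<^sup>2-1)*(1+b\<^sup>2) - (b\<^sup>2-1)*(1+a\<^sup>2))\<^sup>2)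
      / ((1+a\<^sup>2)*(1+b\<^sup>2))\<^sup>2"
    using pos by (simp add: diff_frac_eq power_divide add_divide_distrib)
  also have "(2*a*(1+b\<^sup>2) - 2*b*(1+a\<^sup>2))\<^sup>2 + ((a\<^sup>2-1)*(1+b\<^sup>2) - (b\<^sup>2-1)*(1+a\<^sup>2))\<^sup>2
      = 4 * (a - b)\<^sup>2 * ((1+a\<^sup>2)*(1+b\<^sup>2))"
    by (simp add: power2_eq_square algebra_simps)
  finally show ?thesis
    using pos by (simp add: power2_eq_square)
qed

lemma dist_stereo_Some_le: "dist (stereo (Some a)) (stereo (Some b)) \<le> 2 * \<bar>a - b\<bar>"
proof (rule power2_le_imp_le)
  have "1 \<le> (1 + a\<^sup>2) * (1 + b\<^sup>2)"
    by (metis le_add_same_cancel1 mult_mono' mult_1 zero_le_one zero_le_power2)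
  then have "4 * (a - b)\<^sup>2 / ((1 + a\<^sup>2) * (1 + b\<^sup>2)) \<le> 4 * (a - b)\<^sup>2"
    by (simp add: divide_le_eq mult_le_cancel_left1 order.trans[OF _ mult_right_mono])
  then show "(dist (stereo (Some a)) (stereo (Some b)))\<^sup>2 \<le> (2 * \<bar>a - b\<bar>)\<^sup>2"
    by (simp add: dist_stereo_Some_sq power_mult_distrib)
qed simp

lemma min_abs_le_dist_stereo_zero: "min \<bar>v\<bar> 1 \<le> dist (stereo (Some v)) (stereo (Some 0))"
proof (rule power2_le_imp_le)
  have "(min \<bar>v\<bar> 1)\<^sup>2 \<le> 4 * v\<^sup>2 / (1 + v\<^sup>2)"
  proof (cases "\<bar>v\<bar> \<le> 1")
    case True
    then have "v\<^sup>2 \<le> 1"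
      by (simp add: abs_square_le_1)
    then have "v\<^sup>2 * (1 + v\<^sup>2) \<le> v\<^sup>2 * 2"
      by (intro mult_left_mono) auto
    also have "\<dots> \<le> 4 * v\<^sup>2"
      by simp
    finally have "v\<^sup>2 * (1 + v\<^sup>2) \<le> 4 * v\<^sup>2" .
    then show ?thesis
      using True by (simp add: le_divide_eq add_pos_nonneg min_absorb1)
  next
    case False
    then have "1 \<le> v\<^sup>2"
      by (simp add: abs_square_less_1 flip: not_less)
    then show ?thesis
      using False by (simp add: le_divide_eq)
  qed
  then show "(min \<bar>v\<bar> 1)\<^sup>2 \<le> (dist (stereo (Some v)) (stereo (Some 0)))\<^sup>2"
    by (simp add: dist_stereo_Some_sq)
qed simp

lemma stereo_eq_stereo_zero_iff: "stereo q = stereo (Some 0) \<longleftrightarrow> q = Some 0"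
proof
  assume eq: "stereo q = stereo (Some 0)"
  show "q = Some 0"
  proof (cases q)
    case None
    with eq show ?thesis
      by (simp add: stereo_def)
  next
    case (Some t)
    have "1 + t\<^sup>2 \<noteq> 0"
      by (metis add_pos_nonneg less_irrefl zero_le_power2 zero_less_one)
    with eq Some show ?thesis
      by (simp add: stereo_def)
  qed
qed simp

lemma openin_product_pullback_balls:
  fixes f :: "'a \<Rightarrow> 'b::metric_space" and c :: "'i::finite \<Rightarrow> 'b"
  shows "openin (product_topology (\<lambda>_. pullback_topology UNIV f euclidean) UNIV)
           (Pi\<^sub>E UNIV (\<lambda>i. f -` ball (c i) e))"
  by (simp add: openin_PiE openin_pullback_topology) (use open_ball in blast)

lemma openin_product_pullback_contains_balls:
  fixes f :: "'a \<Rightarrow> 'b::metric_space"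
  assumes T: "openin (product_topology (\<lambda>_::'i::finite. pullback_topology UNIV f euclidean) UNIV) T"
    and "p \<in> T"
  obtains e where "e > 0" and "\<And>y. (\<And>i. dist (f (y i)) (f (p i)) < e) \<Longrightarrow> y \<in> T"
proof -
  obtain U where U: "\<And>i. openin (pullback_topology UNIV f euclidean) (U i)"
    "p \<in> Pi\<^sub>E UNIV U" "Pi\<^sub>E UNIV U \<subseteq> T"
    using T[unfolded openin_product_topology_alt, rule_format, OF \<open>p \<in> T\<close>] by blast
  have "\<forall>\<^sub>F e in at_right 0. \<forall>r. dist (f r) (f (p i)) < e \<longrightarrow> r \<in> U i" for i
  proof -
    obtain G where "open G" "U i = f -` G"
      using U(1)[of i] by (auto simp: openin_pullback_topology)
    moreover have "f (p i) \<in> G"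
      using U(2) \<open>U i = f -` G\<close> by auto
    ultimately obtain b where "b > 0" "ball (f (p i)) b \<subseteq> G"
      by (meson open_contains_ball)
    then show ?thesis
      unfolding eventually_at_right_field
      by (intro exI[of _ b]) (auto simp: \<open>U i = f -` G\<close> dist_commute)
  qed
  then have "\<forall>\<^sub>F e in at_right 0. \<forall>i r. dist (f r) (f (p i)) < e \<longrightarrow> r \<in> U i"
    by (rule eventually_all_finite)
  then obtain b :: real where "b > 0"
    and b: "\<And>e. 0 < e \<Longrightarrow> e < b \<Longrightarrow> \<forall>i r. dist (f r) (f (p i)) < e \<longrightarrow> r \<in> U i"
    unfolding eventually_at_right_field by blast
  show ?thesis
  proof (rule that)
    show "b / 2 > 0"
      using \<open>b > 0\<close> by simp
    fix y assume "\<And>i. dist (f (y i)) (f (p i)) < b / 2"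
    then have "y \<in> Pi\<^sub>E UNIV U"
      using b[of "b / 2"] \<open>b > 0\<close> by (simp add: PiE_iff)
    then show "y \<in> T"
      using U(3) by blast
  qed
qed

lemma in_closure_of_product_pullback_iff:
  fixes f :: "'a \<Rightarrow> 'b::metric_space" and S :: "('i::finite \<Rightarrow> 'a) set"
  shows "p \<in> product_topology (\<lambda>_. pullback_topology UNIV f euclidean) UNIV closure_of S \<longleftrightarrow>
    (\<forall>e>0. \<exists>y\<in>S. \<forall>i. dist (f (y i)) (f (p i)) < e)"
proof
  assume p: "p \<in> product_topology (\<lambda>_. pullback_topology UNIV f euclidean) UNIV closure_of S"
  show "\<forall>e>0. \<exists>y\<in>S. \<forall>i. dist (f (y i)) (f (p i)) < e"
  proof (intro allI impI)
    fix e :: real assume "e > 0"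
    then have "p \<in> Pi\<^sub>E UNIV (\<lambda>i. f -` ball (f (p i)) e)"
      by (simp add: PiE_iff)
    then obtain y where "y \<in> S" "y \<in> Pi\<^sub>E UNIV (\<lambda>i. f -` ball (f (p i)) e)"
      using p openin_product_pullback_balls[of f "\<lambda>i. f (p i)" e] unfolding in_closure_of by blast
    then show "\<exists>y\<in>S. \<forall>i. dist (f (y i)) (f (p i)) < e"
      by (intro bexI[of _ y]) (auto simp: PiE_iff dist_commute)
  qed
next
  assume approx: "\<forall>e>0. \<exists>y\<in>S. \<forall>i. dist (f (y i)) (f (p i)) < e"
  show "p \<in> product_topology (\<lambda>_. pullback_topology UNIV f euclidean) UNIV closure_of S"
    unfolding in_closure_of
  proof (intro conjI allI impI)
    show "p \<in> topspace (product_topology (\<lambda>_. pullback_topology UNIV f euclidean) UNIV)"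
      by (simp add: topspace_pullback_topology)
    fix T assume "p \<in> T \<and> openin (product_topology (\<lambda>_. pullback_topology UNIV f euclidean) UNIV) T"
    then obtain e where "e > 0" and ball_T: "\<And>y. (\<And>i. dist (f (y i)) (f (p i)) < e) \<Longrightarrow> y \<in> T"
      by (metis openin_product_pullback_contains_balls)
    obtain y where "y \<in> S" "\<forall>i. dist (f (y i)) (f (p i)) < e"
      using approx \<open>e > 0\<close> by blast
    then show "\<exists>y. y \<in> S \<and> y \<in> T"
      using ball_T by metis
  qed
qed

lemma in_Ycl_iff:
  "p \<in> Ycl W \<longleftrightarrow>
    (\<forall>e>0. \<exists>w\<in>W. (\<forall>i. 0 \<le> w $ i) \<and> (\<forall>i. dist (stereo (Some (w $ i))) (stereo (p i)) < e))"
  unfolding Ycl_def P1_pow_top_def P1_top_def in_closure_of_product_pullback_iff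
  by (simp add: emb_def; blast)

lemma Ycl_mono: "W \<subseteq> W' \<Longrightarrow> Ycl W \<subseteq> Ycl W'"
  unfolding Ycl_def by (intro closure_of_mono image_mono) auto

lemma Ycl_subset_zero_coords:
  assumes "\<And>w i. w \<in> W \<Longrightarrow> i \<in> F \<Longrightarrow> w $ i = 0"
  shows "Ycl W \<subseteq> {p. \<forall>i\<in>F. p i = Some 0}"
proof (intro subsetI CollectI ballI)
  fix p i assume "p \<in> Ycl W" "i \<in> F"
  show "p i = Some 0"
  proof (rule ccontr)
    assume "p i \<noteq> Some 0"
    then have "dist (stereo (Some 0)) (stereo (p i)) > 0"
      using stereo_eq_stereo_zero_iff[of "p i"] by auto
    then obtain w where "w \<in> W"
      and "dist (stereo (Some (w $ i))) (stereo (p i)) < dist (stereo (Some 0)) (stereo (p i))"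
      using \<open>p \<in> Ycl W\<close> unfolding in_Ycl_iff by blast
    then show False
      using assms \<open>i \<in> F\<close> by simp
  qed
qed

lemma subspace_bounded_coordinate_lift:
  fixes V :: "(real ^ 'n) set" and F :: "'n set"
  assumes "subspace V"
  obtains B where "B \<ge> 0"
    and "\<And>v. v \<in> V \<Longrightarrow> \<exists>z\<in>V. (\<forall>i\<in>F. z $ i = v $ i) \<and> norm z \<le> B * (\<Sum>i\<in>F. \<bar>v $ i\<bar>)"
proof -
  define T where "T v = (\<chi> i. if i \<in> F then v $ i else 0)" for v :: "real ^ 'n"
  have "linear T"
    by (auto simp: T_def linear_iff vec_eq_iff)
  then obtain g where g: "g ` UNIV \<subseteq> V" "linear g" "\<And>y. y \<in> T ` V \<Longrightarrow> T (g y) = y"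
    using real_vector.linear_exists_right_inverse_on[OF _ assms] by blast
  obtain B where "B > 0" and B: "\<And>x. norm (g x) \<le> B * norm x"
    using linear_bounded_pos[OF g(2)] by blast
  have lift: "\<exists>z\<in>V. (\<forall>i\<in>F. z $ i = v $ i) \<and> norm z \<le> B * (\<Sum>i\<in>F. \<bar>v $ i\<bar>)" if "v \<in> V" for v
  proof (intro bexI conjI ballI)
    show "g (T v) \<in> V"
      using g(1) by blast
    have "T (g (T v)) = T v"
      using g(3) \<open>v \<in> V\<close> by blast
    then show "g (T v) $ i = v $ i" if "i \<in> F" for i
      using that by (simp add: T_def vec_eq_iff) (metis (full_types))
    have "norm (T v) \<le> (\<Sum>i\<in>UNIV. \<bar>T v $ i\<bar>)"
      by (rule norm_le_l1_cart)
    also have "\<dots> = (\<Sum>i\<in>F. \<bar>v $ i\<bar>)"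
      by (simp add: T_def if_distrib sum.If_cases)
    finally have "B * norm (T v) \<le> B * (\<Sum>i\<in>F. \<bar>v $ i\<bar>)"
      using \<open>B > 0\<close> by (intro mult_left_mono) auto
    then show "norm (g (T v)) \<le> B * (\<Sum>i\<in>F. \<bar>v $ i\<bar>)"
      using B[of "T v"] by linarith
  qed
  show ?thesis
    using \<open>B > 0\<close> lift by (intro that[of B]) auto
qed

lemma nonneg_vanishing_correction:
  fixes V :: "(real ^ 'n) set" and F :: "'n set"
  assumes V: "subspace V" and "v \<in> V" "z \<in> V" "u \<in> V"
    and z_F: "\<forall>i\<in>F. z $ i = v $ i" and u_F: "\<forall>i\<in>F. u $ i = 0"
    and "m > 0" and m_le: "\<forall>i. i \<notin> F \<longrightarrow> m \<le> u $ i" and v_nonneg: "\<forall>i. 0 \<le> v $ i"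
  defines "w \<equiv> v - z + (norm z / m) *\<^sub>R u"
  shows "w \<in> V" and "\<forall>i\<in>F. w $ i = 0" and "\<forall>i. 0 \<le> w $ i"
    and "\<forall>i. \<bar>w $ i - v $ i\<bar> \<le> norm z * (1 + norm u / m)"
proof -
  define c where "c = norm z / m"
  have "c \<ge> 0"
    using \<open>m > 0\<close> by (simp add: c_def)
  have z_i: "\<bar>z $ i\<bar> \<le> norm z" for i
    by (rule component_le_norm_cart)
  show "w \<in> V"
    unfolding w_def using \<open>v \<in> V\<close> \<open>z \<in> V\<close> \<open>u \<in> V\<close> V
    by (intro subspace_add subspace_diff subspace_mul)
  show "\<forall>i\<in>F. w $ i = 0"
    using z_F u_F by (simp add: w_def)
  show "\<forall>i. 0 \<le> w $ i"
  proof
    fix i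
    show "0 \<le> w $ i"
    proof (cases "i \<in> F")
      case True
      then show ?thesis
        using z_F u_F by (simp add: w_def)
    next
      case False
      have "norm z = c * m"
        using \<open>m > 0\<close> by (simp add: c_def)
      also have "\<dots> \<le> c * u $ i"
        using m_le False \<open>c \<ge> 0\<close> by (simp add: mult_left_mono)
      finally show ?thesis
        using z_i[of i] v_nonneg[rule_format, of i] by (auto simp: w_def c_def abs_le_iff)
    qed
  qed
  show "\<forall>i. \<bar>w $ i - v $ i\<bar> \<le> norm z * (1 + norm u / m)"
  proof
    fix i
    have "\<bar>w $ i - v $ i\<bar> = \<bar>c * u $ i - z $ i\<bar>"
      by (simp add: w_def c_def)
    also have "\<dots> \<le> c * \<bar>u $ i\<bar> + \<bar>z $ i\<bar>"
      using \<open>c \<ge> 0\<close> abs_triangle_ineq4[of "c * u $ i" "z $ i"] by (simp add: abs_mult)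
    also have "\<dots> \<le> c * norm u + norm z"
      using \<open>c \<ge> 0\<close> z_i[of i] component_le_norm_cart[of u i] by (intro add_mono mult_left_mono)
    also have "\<dots> = norm z * (1 + norm u / m)"
      by (simp add: c_def algebra_simps)
    finally show "\<bar>w $ i - v $ i\<bar> \<le> norm z * (1 + norm u / m)" .
  qed
qed

lemma nonneg_vanishing_approximation:
  fixes V :: "(real ^ 'n) set" and F :: "'n set"
  assumes V: "subspace V" and u: "u \<in> V" "\<forall>i\<in>F. u $ i = 0" "\<forall>i. i \<notin> F \<longrightarrow> 0 < u $ i"
  obtains K where "K \<ge> 0"
    and "\<And>v. v \<in> V \<Longrightarrow> \<forall>i. 0 \<le> v $ i \<Longrightarrow>
           \<exists>w\<in>V. (\<forall>i\<in>F. w $ i = 0) \<and> (\<forall>i. 0 \<le> w $ i) \<and>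
                 (\<forall>i. \<bar>w $ i - v $ i\<bar> \<le> K * (\<Sum>j\<in>F. \<bar>v $ j\<bar>))"
proof -
  obtain B where "B \<ge> 0"
    and lift: "\<And>v. v \<in> V \<Longrightarrow> \<exists>z\<in>V. (\<forall>i\<in>F. z $ i = v $ i) \<and> norm z \<le> B * (\<Sum>i\<in>F. \<bar>v $ i\<bar>)"
    using subspace_bounded_coordinate_lift[OF V] by blast
  define m where "m = Min (insert 1 ((\<lambda>i. u $ i) ` (- F)))"
    \<comment> \<open>the 1 keeps the minimum of a nonempty set when F contains every coordinate\<close>
  have "m > 0" "\<forall>i. i \<notin> F \<longrightarrow> m \<le> u $ i"
    using u(3) by (simp_all add: m_def)
  define K where "K = B * (1 + norm u / m)"
  show ?thesis
  proof (rule that)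
    show "K \<ge> 0"
      using \<open>B \<ge> 0\<close> \<open>m > 0\<close> by (simp add: K_def)
    fix v assume "v \<in> V" "\<forall>i. 0 \<le> v $ i"
    obtain z where "z \<in> V" "\<forall>i\<in>F. z $ i = v $ i" and z_norm: "norm z \<le> B * (\<Sum>i\<in>F. \<bar>v $ i\<bar>)"
      using lift[OF \<open>v \<in> V\<close>] by blast
    have "norm z * (1 + norm u / m) \<le> K * (\<Sum>j\<in>F. \<bar>v $ j\<bar>)"
      using mult_right_mono[OF z_norm, of "1 + norm u / m"] \<open>m > 0\<close> by (simp add: K_def mult_ac)
    then show "\<exists>w\<in>V. (\<forall>i\<in>F. w $ i = 0) \<and> (\<forall>i. 0 \<le> w $ i) \<and>
                 (\<forall>i. \<bar>w $ i - v $ i\<bar> \<le> K * (\<Sum>j\<in>F. \<bar>v $ j\<bar>))"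
      using nonneg_vanishing_correction[OF V \<open>v \<in> V\<close> \<open>z \<in> V\<close> u(1) \<open>\<forall>i\<in>F. z $ i = v $ i\<close> u(2)
          \<open>m > 0\<close> \<open>\<forall>i. i \<notin> F \<longrightarrow> m \<le> u $ i\<close> \<open>\<forall>i. 0 \<le> v $ i\<close>]
      by (meson order_trans)
  qed
qed

lemma Ycl_Int_zero_coords_subset:
  fixes V :: "(real ^ 'n) set" and F :: "'n set"
  assumes V: "subspace V" and u: "u \<in> V" "\<forall>i\<in>F. u $ i = 0" "\<forall>i. i \<notin> F \<longrightarrow> 0 < u $ i"
  shows "Ycl V \<inter> {p. \<forall>i\<in>F. p i = Some 0} \<subseteq> Ycl (V \<inter> {v. \<forall>i\<in>F. v $ i = 0})"
proof
  fix p assume "p \<in> Ycl V \<inter> {p. \<forall>i\<in>F. p i = Some 0}"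
  then have p_V: "p \<in> Ycl V" and p_F: "\<And>i. i \<in> F \<Longrightarrow> p i = Some 0"
    by auto
  obtain K where "K \<ge> 0"
    and approx: "\<And>v. v \<in> V \<Longrightarrow> \<forall>i. 0 \<le> v $ i \<Longrightarrow>
           \<exists>w\<in>V. (\<forall>i\<in>F. w $ i = 0) \<and> (\<forall>i. 0 \<le> w $ i) \<and>
                 (\<forall>i. \<bar>w $ i - v $ i\<bar> \<le> K * (\<Sum>j\<in>F. \<bar>v $ j\<bar>))"
    using nonneg_vanishing_approximation[OF V u] by blast
  show "p \<in> Ycl (V \<inter> {v. \<forall>i\<in>F. v $ i = 0})"
    unfolding in_Ycl_iff
  proof (intro allI impI)
    fix e :: real assume "e > 0"
    define C where "C = 2 * K * card F + 1"
    define d where "d = min 1 (e / (2 * C))"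
    have "C \<ge> 1"
      using \<open>K \<ge> 0\<close> by (simp add: C_def)
    have "0 < d" "d \<le> 1"
      using \<open>e > 0\<close> \<open>C \<ge> 1\<close> by (simp_all add: d_def)
    have "C * d \<le> C * (e / (2 * C))"
      using \<open>C \<ge> 1\<close> by (intro mult_left_mono) (simp_all add: d_def)
    also have "\<dots> < e"
      using \<open>C \<ge> 1\<close> \<open>e > 0\<close> by simp
    finally have "C * d < e" .
    obtain v where "v \<in> V" "\<forall>i. 0 \<le> v $ i"
      and v_close: "\<forall>i. dist (stereo (Some (v $ i))) (stereo (p i)) < d"
      using p_V \<open>0 < d\<close> unfolding in_Ycl_iff by blast
    have "\<bar>v $ j\<bar> \<le> d" if "j \<in> F" for j
    proof -
      have "min \<bar>v $ j\<bar> 1 < d"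
        using min_abs_le_dist_stereo_zero[of "v $ j"] v_close p_F[OF that] by (metis order.strict_trans1)
      then show ?thesis
        using \<open>d \<le> 1\<close> by linarith
    qed
    then have v_F: "(\<Sum>j\<in>F. \<bar>v $ j\<bar>) \<le> card F * d"
      by (rule sum_bounded_above)
    obtain w where "w \<in> V" "\<forall>i\<in>F. w $ i = 0" "\<forall>i. 0 \<le> w $ i"
      and w_close: "\<forall>i. \<bar>w $ i - v $ i\<bar> \<le> K * (\<Sum>j\<in>F. \<bar>v $ j\<bar>)"
      using approx[OF \<open>v \<in> V\<close> \<open>\<forall>i. 0 \<le> v $ i\<close>] by blast
    have "dist (stereo (Some (w $ i))) (stereo (p i)) < e" for i
    proof -
      have "\<bar>w $ i - v $ i\<bar> \<le> K * (card F * d)"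
        using w_close mult_left_mono[OF v_F \<open>K \<ge> 0\<close>] by (blast intro: order_trans)
      have "dist (stereo (Some (w $ i))) (stereo (p i))
          \<le> dist (stereo (Some (w $ i))) (stereo (Some (v $ i))) + dist (stereo (Some (v $ i))) (stereo (p i))"
        by (rule dist_triangle)
      also have "\<dots> < 2 * \<bar>w $ i - v $ i\<bar> + d"
        using dist_stereo_Some_le[of "w $ i" "v $ i"] v_close by (simp add: add_le_less_mono)
      also have "\<dots> \<le> C * d"
        using \<open>\<bar>w $ i - v $ i\<bar> \<le> K * (card F * d)\<close> by (simp add: C_def algebra_simps)
      finally show ?thesis
        using \<open>C * d < e\<close> by simp
    qed
    then show "\<exists>w\<in>V \<inter> {v. \<forall>i\<in>F. v $ i = 0}. (\<forall>i. 0 \<le> w $ i) \<and>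
        (\<forall>i. dist (stereo (Some (w $ i))) (stereo (p i)) < e)"
      using \<open>w \<in> V\<close> \<open>\<forall>i\<in>F. w $ i = 0\<close> \<open>\<forall>i. 0 \<le> w $ i\<close> by blast
  qed
qed

theorem corollary3p5:
  fixes V :: "(real ^ 'e::finite) set" and F :: "'e set"
  assumes "subspace V"
    and "acyclic_flat V F"
  shows "Ycl V \<inter> {p. \<forall>i\<in>F. p i = Some 0} = Ycl (V \<inter> {v. \<forall>i\<in>F. v $ i = 0})"
proof
  let ?W = "V \<inter> {v. \<forall>i\<in>F. v $ i = 0}"
  obtain u where u: "u \<in> V" "\<forall>i\<in>F. u $ i = 0" "\<forall>i. i \<notin> F \<longrightarrow> 0 < u $ i"
    using assms(2) unfolding acyclic_flat_def by blast
  then show "Ycl V \<inter> {p. \<forall>i\<in>F. p i = Some 0} \<subseteq> Ycl ?W"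
    by (rule Ycl_Int_zero_coords_subset[OF assms(1)])
  have "Ycl ?W \<subseteq> Ycl V"
    by (rule Ycl_mono) blast
  moreover have "Ycl ?W \<subseteq> {p. \<forall>i\<in>F. p i = Some 0}"
    by (rule Ycl_subset_zero_coords) blast
  ultimately show "Ycl ?W \<subseteq> Ycl V \<inter> {p. \<forall>i\<in>F. p i = Some 0}"
    by blast
qed

end
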